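(* Let $Z_1,\ldots,Z_n$ be i.i.d. from a distribution $\mathcal{D}$ on a set $\mathbb{Z}$, let $\ell:\Theta\times\mathbb{Z}\to[0,\infty)$ be a loss function with risk $R(\theta)=\mathbb{E}_{Z\sim\mathcal{D}}\{\ell(\theta;Z)\}$ and risk minimizer $\theta^*=\arg\min_{\theta\in\Theta}R(\theta)$. Suppose the strong central condition holds with learning rate $\bar\omega>0$. Let the sample $S=(Z_1,\ldots,Z_n)$ be partitioned as $S=S_1\sqcup S_2$ into two sub-samples of sizes $n_1$ and $n_2$, let $\widehat\theta_{S_1}$ be any AERM computed on $S_1$, and for $\omega\ge0$ define the offline GUe-value $$G_{n,\mathrm{off}}(\theta)=\exp\bigl[-\omega\, n_2\{\widehat R_{S_2}(\widehat\theta_{S_1})-\widehat R_{S_2}(\theta)\}\bigr],$$ where $\widehat R_{S_2}(\theta)=n_2^{-1}\sum_{Z\in S_2}\ell(\theta;Z)$. If $\omega\in[0,\bar\omega)$, then $G_{n,\mathrm{off}}(\theta^* )$ is an e-value, i.e. $\mathbb{E}\{G_{n,\mathrm{off}}(\theta^* )\}\le 1$.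
   Context: For a finite sub-sample $T$ of size $m$, $\widehat R_T(\theta)=m^{-1}\sum_{Z\in T}\ell(\theta;Z)$. For fixed constants $\varepsilon,\delta\ge0$, an $(\varepsilon,\delta)$-AERM on $T$ is an estimator $\widehat\theta_T$ (a measurable function of $T$) with $\widehat R_T(\widehat\theta_T)\le\inf_{\theta\in\Theta}\widehat R_T(\theta)+\delta/m^{1+\varepsilon}$; an AERM is an $(\varepsilon,\delta)$-AERM for some such constants. Strong central condition with learning rate $\bar\omega>0$: $\mathbb{E}_{Z\sim\mathcal{D}}\exp[-\omega\{\ell(\theta;Z)-\ell(\theta^*;Z)\}]\le1$ for all $\theta\in\Theta$ and all $\omega\in[0,\bar\omega)$. An e-value is a non-negative random variable with expectation at most 1. *)

theory Defs
  imports "HOL-Probability.Probability"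
begin

definition emp_risk :: "('t \<Rightarrow> 'z \<Rightarrow> real) \<Rightarrow> nat set \<Rightarrow> (nat \<Rightarrow> 'z) \<Rightarrow> 't \<Rightarrow> real" where
  "emp_risk l T s th = (\<Sum>i\<in>T. l th (s i)) / real (card T)"

definition risk :: "'z measure \<Rightarrow> ('t \<Rightarrow> 'z \<Rightarrow> real) \<Rightarrow> 't \<Rightarrow> real" where
  "risk D l th = (\<integral>z. l th z \<partial>D)"

definition aerm :: "'z measure \<Rightarrow> 't measure \<Rightarrow> ('t \<Rightarrow> 'z \<Rightarrow> real) \<Rightarrow> nat set
    \<Rightarrow> ((nat \<Rightarrow> 'z) \<Rightarrow> 't) \<Rightarrow> bool" where
  "aerm D Th l T est \<longleftrightarrow>
     est \<in> measurable (PiM T (\<lambda>_. D)) Th \<and>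
     (\<exists>eps delta. eps \<ge> 0 \<and> delta \<ge> 0 \<and>
        (\<forall>s\<in>space (PiM T (\<lambda>_. D)).
           emp_risk l T s (est s) \<le> (INF th\<in>space Th. emp_risk l T s th)
              + delta / (real (card T) powr (1 + eps))))"

definition strong_central :: "'z measure \<Rightarrow> 't measure \<Rightarrow> ('t \<Rightarrow> 'z \<Rightarrow> real) \<Rightarrow> 't \<Rightarrow> real \<Rightarrow> bool" where
  "strong_central D Th l thstar wbar \<longleftrightarrow>
     (\<forall>th\<in>space Th. \<forall>w. 0 \<le> w \<and> w < wbar \<longrightarrow>
        (\<integral>\<^sup>+ z. ennreal (exp (- w * (l th z - l thstar z))) \<partial>D) \<le> 1)"

definition e_value :: "'a measure \<Rightarrow> ('a \<Rightarrow> real) \<Rightarrow> bool" where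
  "e_value M X \<longleftrightarrow> X \<in> borel_measurable M \<and> (\<forall>x\<in>space M. X x \<ge> 0) \<and>
     (\<integral>\<^sup>+ x. ennreal (X x) \<partial>M) \<le> 1"

end

theory Submission
  imports Defs
begin

text \<open>Scaled by the size of the held-out sample, the difference of empirical risks becomes a
  sum over that sample, so the GUe-value factorises into one factor per held-out observation.
  These factors are independent of the estimate, which only sees the other sub-sample; given
  that sub-sample, each factor has conditional expectation at most 1 by the strong central
  condition, hence so has their product, and integrating out the first sub-sample gives the
  claim.\<close>

lemma exp_scaled_emp_risk_diff:
  assumes "finite T"
  shows "exp (- w * (real (card T) * (emp_risk l T s a - emp_risk l T s b)))
       = (\<Prod>i\<in>T. exp (- w * (l a (s i) - l b (s i))))"
proof (cases "T = {}")
  case False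
  then have "real (card T) * (emp_risk l T s a - emp_risk l T s b)
           = (\<Sum>i\<in>T. l a (s i) - l b (s i))"
    using assms by (simp add: emp_risk_def field_simps sum_subtractf)
  then show ?thesis
    using assms by (simp add: sum_distrib_left exp_sum)
qed simp

lemma measurable_held_out_prod:
  fixes est :: "('i \<Rightarrow> 'a) \<Rightarrow> 't" and g :: "'t \<Rightarrow> 'a \<Rightarrow> real"
  assumes "I \<subseteq> K" "J \<subseteq> K"
    and est: "est \<in> measurable (PiM I (\<lambda>_. N)) Th"
    and g_meas: "(\<lambda>(th, z). g th z) \<in> borel_measurable (Th \<Otimes>\<^sub>M N)"
  shows "(\<lambda>s. \<Prod>i\<in>J. g (est (restrict s I)) (s i)) \<in> borel_measurable (PiM K (\<lambda>_. N))"
proof (intro borel_measurable_prod)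
  fix i assume "i \<in> J"
  then have "(\<lambda>s. (est (restrict s I), s i)) \<in> measurable (PiM K (\<lambda>_. N)) (Th \<Otimes>\<^sub>M N)"
    using assms by (intro measurable_Pair measurable_compose[OF measurable_restrict_subset est]) auto
  from measurable_compose[OF this g_meas]
  show "(\<lambda>s. g (est (restrict s I)) (s i)) \<in> borel_measurable (PiM K (\<lambda>_. N))"
    by simp
qed

context prob_space
begin

lemma nn_integral_PiM_prod_le_1:
  assumes "finite J"
    and "\<And>i. i \<in> J \<Longrightarrow> f i \<in> borel_measurable M"
    and "\<And>i. i \<in> J \<Longrightarrow> (\<integral>\<^sup>+ z. f i z \<partial>M) \<le> 1"
  shows "(\<integral>\<^sup>+ y. (\<Prod>i\<in>J. f i (y i)) \<partial>PiM J (\<lambda>_. M)) \<le> 1"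
proof -
  interpret product_prob_space "\<lambda>_. M" UNIV by unfold_locales
  have "(\<integral>\<^sup>+ y. (\<Prod>i\<in>J. f i (y i)) \<partial>PiM J (\<lambda>_. M)) = (\<Prod>i\<in>J. \<integral>\<^sup>+ z. f i z \<partial>M)"
    using assms by (intro product_nn_integral_prod) auto
  also have "\<dots> \<le> 1"
    using assms by (intro prod_le_1) auto
  finally show ?thesis .
qed

lemma e_value_held_out_prod:
  fixes est :: "(nat \<Rightarrow> 'a) \<Rightarrow> 't" and g :: "'t \<Rightarrow> 'a \<Rightarrow> real"
  assumes fin: "finite I" "finite J" and disj: "I \<inter> J = {}"
    and est: "est \<in> measurable (PiM I (\<lambda>_. M)) Th"
    and g_meas: "(\<lambda>(th, z). g th z) \<in> borel_measurable (Th \<Otimes>\<^sub>M M)"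
    and g_nonneg: "\<And>th z. g th z \<ge> 0"
    and g_le_1: "\<And>th. th \<in> space Th \<Longrightarrow> (\<integral>\<^sup>+ z. ennreal (g th z) \<partial>M) \<le> 1"
  shows "e_value (PiM (I \<union> J) (\<lambda>_. M)) (\<lambda>s. \<Prod>i\<in>J. g (est (restrict s I)) (s i))"
proof -
  interpret PI: prob_space "PiM I (\<lambda>_. M)" using prob_space_axioms by (rule prob_space_PiM)
  interpret P: product_prob_space "\<lambda>_. M" UNIV by unfold_locales
  have g[measurable]: "(\<lambda>x. g (fst x) (snd x)) \<in> borel_measurable (Th \<Otimes>\<^sub>M M)"
    using g_meas by (simp add: case_prod_beta')
  have g_section: "(\<lambda>z. ennreal (g th z)) \<in> borel_measurable M" if "th \<in> space Th" for th
    using measurable_compose[OF measurable_Pair1'[OF that] g] by simp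
  let ?X = "\<lambda>s. \<Prod>i\<in>J. g (est (restrict s I)) (s i)"
  have X_meas: "?X \<in> borel_measurable (PiM (I \<union> J) (\<lambda>_. M))"
    using est g_meas by (intro measurable_held_out_prod) auto
  have "(\<integral>\<^sup>+ s. ennreal (?X s) \<partial>PiM (I \<union> J) (\<lambda>_. M))
      = (\<integral>\<^sup>+ x. (\<integral>\<^sup>+ y. ennreal (?X (merge I J (x, y))) \<partial>PiM J (\<lambda>_. M)) \<partial>PiM I (\<lambda>_. M))"
    using X_meas by (intro P.product_nn_integral_fold disj fin) auto
  also have "\<dots> \<le> (\<integral>\<^sup>+ x. 1 \<partial>PiM I (\<lambda>_. M))"
  proof (intro nn_integral_mono)
    fix x assume x: "x \<in> space (PiM I (\<lambda>_. M))"
    have "restrict (merge I J (x, y)) I = x" for y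
      using x by (auto simp: merge_def space_PiM PiE_def extensional_def fun_eq_iff)
    moreover have "merge I J (x, y) i = y i" if "i \<in> J" for i y
      using that disj by (auto simp: merge_def)
    ultimately have "(\<integral>\<^sup>+ y. ennreal (?X (merge I J (x, y))) \<partial>PiM J (\<lambda>_. M))
        = (\<integral>\<^sup>+ y. (\<Prod>i\<in>J. ennreal (g (est x) (y i))) \<partial>PiM J (\<lambda>_. M))"
      using g_nonneg by (intro nn_integral_cong) (simp add: prod_ennreal)
    also have "\<dots> \<le> 1"
      using fin g_section g_le_1 measurable_space[OF est x]
      by (intro nn_integral_PiM_prod_le_1) auto
    finally show "(\<integral>\<^sup>+ y. ennreal (?X (merge I J (x, y))) \<partial>PiM J (\<lambda>_. M)) \<le> 1" .
  qed
  also have "\<dots> = 1"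
    by (simp add: PI.emeasure_space_1)
  finally show ?thesis
    unfolding e_value_def using X_meas g_nonneg by (simp add: prod_nonneg)
qed

end

theorem lemma2:
  fixes D :: "'z measure" and Th :: "'t measure" and l :: "'t \<Rightarrow> 'z \<Rightarrow> real"
    and thstar :: 't and wbar w :: real and n :: nat and I1 I2 :: "nat set"
    and est :: "(nat \<Rightarrow> 'z) \<Rightarrow> 't"
  assumes D: "prob_space D"
    and l_meas: "(\<lambda>(th, z). l th z) \<in> borel_measurable (Th \<Otimes>\<^sub>M D)"
    and l_nonneg: "\<And>th z. th \<in> space Th \<Longrightarrow> z \<in> space D \<Longrightarrow> l th z \<ge> 0"
    and l_int: "\<And>th. th \<in> space Th \<Longrightarrow> integrable D (l th)"
    and thstar: "thstar \<in> space Th"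
    and argmin: "\<And>th. th \<in> space Th \<Longrightarrow> risk D l thstar \<le> risk D l th"
    and wbar: "wbar > 0"
    and central: "strong_central D Th l thstar wbar"
    and I1: "I1 \<subseteq> {..<n}"
    and I2: "I2 = {..<n} - I1"
    and est: "aerm D Th l I1 est"
    and w: "0 \<le> w" "w < wbar"
  shows "e_value (PiM {..<n} (\<lambda>_. D))
           (\<lambda>s. exp (- w * (real (card I2) *
              (emp_risk l I2 s (est (restrict s I1)) - emp_risk l I2 s thstar))))"
proof -
  interpret prob_space D by (rule D)
  have split: "I1 \<union> I2 = {..<n}" "I1 \<inter> I2 = {}" "finite I1" "finite I2"
    using I1 I2 finite_subset by auto
  have l[measurable]: "(\<lambda>x. l (fst x) (snd x)) \<in> borel_measurable (Th \<Otimes>\<^sub>M D)"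
    using l_meas by (simp add: case_prod_beta')
  have thstar_section: "l thstar \<in> borel_measurable D"
    using measurable_compose[OF measurable_Pair1'[OF thstar] l] by simp
  have "e_value (PiM (I1 \<union> I2) (\<lambda>_. D))
          (\<lambda>s. \<Prod>i\<in>I2. exp (- w * (l (est (restrict s I1)) (s i) - l thstar (s i))))"
  proof (rule e_value_held_out_prod)
    show "est \<in> measurable (PiM I1 (\<lambda>_. D)) Th"
      using est by (simp add: aerm_def)
    show "(\<lambda>(th, z). exp (- w * (l th z - l thstar z))) \<in> borel_measurable (Th \<Otimes>\<^sub>M D)"
      using thstar_section by (simp add: case_prod_beta') measurable
    show "(\<integral>\<^sup>+ z. ennreal (exp (- w * (l th z - l thstar z))) \<partial>D) \<le> 1" if "th \<in> space Th" for th
      using central that w by (simp add: strong_central_def)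
  qed (use split in auto)
  then show ?thesis
    unfolding exp_scaled_emp_risk_diff[OF \<open>finite I2\<close>] split(1) .
qed

end
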